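(* Let $\mathbf T$ be a countable homogeneous tournament and $\mathbf T^*$ an expansion of $\mathbf T$ as in the context. If $\mathrm{Age}(\mathbf T^* )$ has the expansion property relative to $\mathrm{Age}(\mathbf T)$, then for every positive integer $n$, $\mathrm{Age}(I_n[\mathbf T]^* )$ has the expansion property relative to $\mathrm{Age}(I_n[\mathbf T])$, where $I_n[\mathbf T]$ is the reduct of $I_n[\mathbf T]^*$ to $\{E\}$.
   Context: The age $\mathrm{Age}(\mathbf F)$ of a structure $\mathbf F$ is the class of finite structures embeddable in $\mathbf F$. Expansion property: let $L\subseteq L^*$ be relational languages, $\mathcal K$ a class of finite $L$-structures and $\mathcal K^*$ a class of finite $L^*$-structures whose $L$-reducts lie in $\mathcal K$. $\mathcal K^*$ has the expansion property relative to $\mathcal K$ if for every $\mathbf A\in\mathcal K$ there is $\mathbf B\in\mathcal K$ such that for all $\mathbf A^*,\mathbf B^*\in\mathcal K^*$ whose $L$-reducts are $\mathbf A$ and $\mathbf B$ respectively, $\mathbf A^*$ embeds into $\mathbf B^*$. A tournament is a directed graph in which every pair of distinct vertices carries exactly one directed edge; it is homogeneous if every isomorphism between finite substructures extends to an automorphism. $\mathbf T=(T,E^{\mathbf T})$ is a countable homogeneous tournament, and $\mathbf T^*$ is an expansion of $\mathbf T$ to a countable relational language $L_{\mathbf T^*}\supseteq\{E,<\}$ in which $<$ is interpreted as a linear order $<^*$ on $T$. For a positive integer $n$, $[n]=\{0,\dots,n-1\}$. The structure $I_n[\mathbf T]^*$ has universe $[n]\times T$ and language $L_{\mathbf T^*}\cup\{P_0,\dots,P_{n-1}\}$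 ($P_i$ new unary symbols), interpreted as: for each $m$-ary $R\in L_{\mathbf T^*}\setminus\{<\}$ (including $E$), $R((k_1,x_1),\dots,(k_m,x_m))$ iff $k_1=\dots=k_m$ and $R^{\mathbf T^*}(x_1,\dots,x_m)$; $(i,x)<(j,y)$ iff $i<j$, or $i=j$ and $x<^*y$; and $P_i=\{i\}\times T$. *)

theory Defs
  imports Main "HOL-Library.Countable_Set"
begin

type_synonym ('a, 'r) struct = "'a set \<times> ('r \<Rightarrow> 'a list \<Rightarrow> bool)"

definition univ :: "('a, 'r) struct \<Rightarrow> 'a set" where
  "univ A = fst A"

definition rel :: "('a, 'r) struct \<Rightarrow> 'r \<Rightarrow> 'a list \<Rightarrow> bool" where
  "rel A = snd A"

definition wf_struct :: "'r set \<Rightarrow> ('r \<Rightarrow> nat) \<Rightarrow> ('a, 'r) struct \<Rightarrow> bool" where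
  "wf_struct L ar A \<longleftrightarrow>
     (\<forall>R xs. rel A R xs \<longrightarrow> R \<in> L \<and> length xs = ar R \<and> set xs \<subseteq> univ A)"

definition embedding :: "'r set \<Rightarrow> ('r \<Rightarrow> nat) \<Rightarrow> ('a \<Rightarrow> 'b) \<Rightarrow> ('a, 'r) struct \<Rightarrow> ('b, 'r) struct \<Rightarrow> bool" where
  "embedding L ar f A B \<longleftrightarrow>
     inj_on f (univ A) \<and> f ` univ A \<subseteq> univ B \<and>
     (\<forall>R\<in>L. \<forall>xs. length xs = ar R \<and> set xs \<subseteq> univ A \<longrightarrow>
        (rel A R xs \<longleftrightarrow> rel B R (map f xs)))"

definition embeds :: "'r set \<Rightarrow> ('r \<Rightarrow> nat) \<Rightarrow> ('a, 'r) struct \<Rightarrow> ('b, 'r) struct \<Rightarrow> bool" where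
  "embeds L ar A B \<longleftrightarrow> (\<exists>f. embedding L ar f A B)"

definition induced :: "('a, 'r) struct \<Rightarrow> 'a set \<Rightarrow> ('a, 'r) struct" where
  "induced A S = (S, \<lambda>R xs. rel A R xs \<and> set xs \<subseteq> S)"

definition reduct :: "'r set \<Rightarrow> ('a, 'r) struct \<Rightarrow> ('a, 'r) struct" where
  "reduct L' A = (univ A, \<lambda>R xs. R \<in> L' \<and> rel A R xs)"

text \<open>Since all notions involved are isomorphism invariant, we take
representatives with universe a finite set of natural numbers.\<close>
definition Age :: "'r set \<Rightarrow> ('r \<Rightarrow> nat) \<Rightarrow> ('a, 'r) struct \<Rightarrow> (nat, 'r) struct set" where
  "Age L ar F = {A. finite (univ A) \<and> wf_struct L ar A \<and> embeds L ar A F}"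

definition expansion_property ::
  "'r set \<Rightarrow> 'r set \<Rightarrow> ('r \<Rightarrow> nat) \<Rightarrow> ('a, 'r) struct set \<Rightarrow> ('a, 'r) struct set \<Rightarrow> bool" where
  "expansion_property L Lstar ar K Kstar \<longleftrightarrow>
     (\<forall>A\<in>K. \<exists>B\<in>K. \<forall>As\<in>Kstar. \<forall>Bs\<in>Kstar.
        reduct L As = A \<longrightarrow> reduct L Bs = B \<longrightarrow> embeds Lstar ar As Bs)"

definition homogeneous :: "'r set \<Rightarrow> ('r \<Rightarrow> nat) \<Rightarrow> ('a, 'r) struct \<Rightarrow> bool" where
  "homogeneous L ar F \<longleftrightarrow>
     (\<forall>A B f. finite A \<and> A \<subseteq> univ F \<and> B \<subseteq> univ F \<and> bij_betw f A B \<and>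
        embedding L ar f (induced F A) (induced F B) \<longrightarrow>
        (\<exists>g. bij_betw g (univ F) (univ F) \<and> embedding L ar g F F \<and> (\<forall>x\<in>A. g x = f x)))"

definition tournament :: "'r \<Rightarrow> ('a, 'r) struct \<Rightarrow> bool" where
  "tournament E T \<longleftrightarrow>
     (\<forall>x\<in>univ T. \<not> rel T E [x, x]) \<and>
     (\<forall>x\<in>univ T. \<forall>y\<in>univ T. x \<noteq> y \<longrightarrow> (rel T E [x, y] \<longleftrightarrow> \<not> rel T E [y, x]))"

definition strict_linear_order_on :: "'a set \<Rightarrow> ('a \<Rightarrow> 'a \<Rightarrow> bool) \<Rightarrow> bool" where
  "strict_linear_order_on S lt \<longleftrightarrow>
     (\<forall>x\<in>S. \<not> lt x x) \<and>
     (\<forall>x\<in>S. \<forall>y\<in>S. \<forall>z\<in>S. lt x y \<longrightarrow> lt y z \<longrightarrow> lt x z) \<and>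
     (\<forall>x\<in>S. \<forall>y\<in>S. x \<noteq> y \<longrightarrow> lt x y \<or> lt y x)"

text \<open>Language of I_n[T]^*: old symbols Inl R (R in L), plus unary Inr i = P_i.\<close>
definition In_lang :: "'r set \<Rightarrow> nat \<Rightarrow> ('r + nat) set" where
  "In_lang L n = Inl ` L \<union> Inr ` {..<n}"

definition In_arity :: "('r \<Rightarrow> nat) \<Rightarrow> ('r + nat) \<Rightarrow> nat" where
  "In_arity ar S = (case S of Inl R \<Rightarrow> ar R | Inr i \<Rightarrow> 1)"

definition In_star :: "'r set \<Rightarrow> ('r \<Rightarrow> nat) \<Rightarrow> 'r \<Rightarrow> nat \<Rightarrow> ('a, 'r) struct \<Rightarrow>
    (nat \<times> 'a, 'r + nat) struct" where
  "In_star L ar Lt n Ts =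
     ({..<n} \<times> univ Ts,
      \<lambda>S xs. set xs \<subseteq> {..<n} \<times> univ Ts \<and>
        (case S of
           Inl R \<Rightarrow> R \<in> L \<and>
             (if R = Lt then
                (\<exists>i x j y. xs = [(i, x), (j, y)] \<and> (i < j \<or> (i = j \<and> rel Ts Lt [x, y])))
              else
                length xs = ar R \<and> (\<exists>k. \<forall>p\<in>set xs. fst p = k) \<and> rel Ts R (map snd xs))
         | Inr i \<Rightarrow> i < n \<and> (\<exists>x. xs = [(i, x)])))"

end

theory Submission
  imports Defs
begin

text \<open>
  The edge relation of \<open>I\<^sub>n[T]\<close> is the disjoint union of \<open>n\<close> copies of the tournament
  \<open>T\<close>, so the blocks \<open>{i} \<times> T\<close> are its connected components and every embedding respects
  blocks. For \<open>A\<close> in the age of \<open>I\<^sub>n[T]\<close>, let \<open>S \<subseteq> T\<close> be the set of \<open>T\<close>-coordinates of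
  \<open>A\<close> and let \<open>B\<^sub>0\<close> witness the expansion property of \<open>T\<^sup>*\<close> for \<open>S\<close>; the witness for
  \<open>A\<close> is \<open>n\<close> disjoint copies of \<open>B\<^sub>0\<close>. Given expansions \<open>A\<^sup>*\<close> and \<open>B\<^sup>*\<close>, homogeneity
  of \<open>T\<close> moves each block of \<open>A\<close> back onto \<open>S\<close>, the embedding of \<open>B\<^sup>*\<close> sends the
  copies of \<open>B\<^sub>0\<close> bijectively onto the blocks, and the expansion property of \<open>T\<^sup>*\<close> embeds
  each block of \<open>A\<^sup>*\<close> into the matching copy. These maps glue to an embedding
  \<open>A\<^sup>* \<rightarrow> B\<^sup>*\<close>, because the order between blocks and the predicates \<open>P\<^sub>i\<close> only
  depend on the block indices.
\<close>

lemma univ_pair [simp]: "univ (S, r) = S"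
  by (simp add: univ_def)

lemma rel_pair [simp]: "rel (S, r) = r"
  by (simp add: rel_def)

lemma univ_reduct [simp]: "univ (reduct L A) = univ A"
  by (simp add: reduct_def univ_def)

lemma rel_reduct [simp]: "rel (reduct L A) R xs \<longleftrightarrow> R \<in> L \<and> rel A R xs"
  by (simp add: reduct_def rel_def)

lemma struct_eqI: "univ A = univ B \<Longrightarrow> (\<And>R xs. rel A R xs \<longleftrightarrow> rel B R xs) \<Longrightarrow> A = B"
  by (simp add: univ_def rel_def prod_eq_iff fun_eq_iff)

lemma univ_induced [simp]: "univ (induced A S) = S"
  by (simp add: induced_def)

lemma rel_induced [simp]: "rel (induced A S) R xs \<longleftrightarrow> rel A R xs \<and> set xs \<subseteq> S"
  by (simp add: induced_def)

lemma length_eq_2_conv: "length xs = 2 \<longleftrightarrow> (\<exists>a b. xs = [a, b])"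
  by (auto simp: numeral_2_eq_2 length_Suc_conv)

lemma embedding_comp:
  assumes f: "embedding L ar f A B" and g: "embedding L ar g B C"
  shows "embedding L ar (g \<circ> f) A C"
  unfolding embedding_def
proof (intro conjI ballI allI impI)
  have "inj_on f (univ A)" "f ` univ A \<subseteq> univ B" "inj_on g (univ B)" "g ` univ B \<subseteq> univ C"
    using f g by (auto simp: embedding_def)
  then show "inj_on (g \<circ> f) (univ A)" "(g \<circ> f) ` univ A \<subseteq> univ C"
    by (auto intro: comp_inj_on inj_on_subset)
  fix R xs
  assume "R \<in> L" and xs: "length xs = ar R \<and> set xs \<subseteq> univ A"
  moreover have "set (map f xs) \<subseteq> univ B"
    using xs \<open>f ` univ A \<subseteq> univ B\<close> by auto
  ultimately show "rel A R xs \<longleftrightarrow> rel C R (map (g \<circ> f) xs)"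
    using f g unfolding embedding_def by simp
qed

lemma embedding_cancel:
  assumes "embedding L ar g B C" and "embedding L ar (g \<circ> f) A C" and "f ` univ A \<subseteq> univ B"
  shows "embedding L ar f A B"
proof -
  have "set (map f xs) \<subseteq> univ B" if "set xs \<subseteq> univ A" for xs
    using that assms(3) by auto
  moreover have "inj_on f (univ A)"
    using assms(2) unfolding embedding_def by (blast dest: inj_on_imageI2)
  ultimately show ?thesis
    using assms unfolding embedding_def by simp
qed

lemma embedding_relD:
  "embedding L ar f A B \<Longrightarrow> R \<in> L \<Longrightarrow> length xs = ar R \<Longrightarrow> set xs \<subseteq> univ A \<Longrightarrow>
     rel A R xs \<longleftrightarrow> rel B R (map f xs)"
  unfolding embedding_def by blast

lemma embedding_reduct:
  "embedding L' ar h A B \<Longrightarrow> L \<subseteq> L' \<Longrightarrow> embedding L ar h (reduct L A) (reduct L B)"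
  unfolding embedding_def by auto

section \<open>Pullback structures\<close>

definition pullback :: "'r set \<Rightarrow> ('r \<Rightarrow> nat) \<Rightarrow> ('b, 'r) struct \<Rightarrow> ('a \<Rightarrow> 'b) \<Rightarrow> 'a set \<Rightarrow> ('a, 'r) struct"
  where "pullback L ar F u S = (S, \<lambda>R xs. R \<in> L \<and> length xs = ar R \<and> set xs \<subseteq> S \<and> rel F R (map u xs))"

lemma univ_pullback [simp]: "univ (pullback L ar F u S) = S"
  by (simp add: pullback_def)

lemma rel_pullback [simp]:
  "rel (pullback L ar F u S) R xs \<longleftrightarrow> R \<in> L \<and> length xs = ar R \<and> set xs \<subseteq> S \<and> rel F R (map u xs)"
  by (simp add: pullback_def)

lemma pullback_cong:
  assumes "\<And>x. x \<in> S \<Longrightarrow> u x = u' x"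
  shows "pullback L ar F u S = pullback L ar F u' S"
proof (rule struct_eqI)
  fix R xs
  have "set xs \<subseteq> S \<Longrightarrow> map u xs = map u' xs"
    using assms by auto
  then show "rel (pullback L ar F u S) R xs \<longleftrightarrow> rel (pullback L ar F u' S) R xs"
    unfolding rel_pullback by metis
qed simp

lemma wf_struct_pullback: "wf_struct L ar (pullback L ar F u S)"
  by (simp add: wf_struct_def)

lemma embedding_pullback: "inj_on u S \<Longrightarrow> u ` S \<subseteq> univ F \<Longrightarrow> embedding L ar u (pullback L ar F u S) F"
  by (simp add: embedding_def)

lemma embedding_into_pullback:
  "inj_on w S \<Longrightarrow> w ` S \<subseteq> S' \<Longrightarrow> embedding L ar w (pullback L ar F (u \<circ> w) S) (pullback L ar F u S')"
  by (auto simp: embedding_def)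

lemma pullback_pullback:
  "w ` S \<subseteq> S' \<Longrightarrow> pullback L ar (pullback L ar F u S') w S = pullback L ar F (u \<circ> w) S"
  by (rule struct_eqI) auto

lemma reduct_pullback: "L \<subseteq> L' \<Longrightarrow> reduct L (pullback L' ar F u S) = pullback L ar F u S"
  by (rule struct_eqI) auto

lemma pullback_reduct: "L \<subseteq> L' \<Longrightarrow> pullback L ar (reduct L' F) u S = pullback L ar F u S"
  by (rule struct_eqI) auto

lemma pullback_embedding:
  "embedding L ar g A B \<Longrightarrow> S \<subseteq> univ A \<Longrightarrow> pullback L ar B g S = pullback L ar A id S"
  unfolding embedding_def by (intro struct_eqI) (auto simp: subset_iff)

lemma embedding_eq_pullback:
  assumes "wf_struct L ar A" and "embedding L ar g A F"
  shows "A = pullback L ar F g (univ A)"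
proof (rule struct_eqI)
  fix R xs
  have "rel A R xs \<Longrightarrow> R \<in> L \<and> length xs = ar R \<and> set xs \<subseteq> univ A"
    using assms(1) unfolding wf_struct_def by blast
  moreover have "R \<in> L \<Longrightarrow> length xs = ar R \<Longrightarrow> set xs \<subseteq> univ A \<Longrightarrow> rel A R xs \<longleftrightarrow> rel F R (map g xs)"
    using assms(2) unfolding embedding_def by blast
  ultimately show "rel A R xs \<longleftrightarrow> rel (pullback L ar F g (univ A)) R xs"
    by auto
qed simp

lemma pullback_in_Age:
  assumes "finite S" and "inj_on u S" and "u ` S \<subseteq> univ F"
  shows "pullback L ar F u S \<in> Age L ar F"
proof -
  have "wf_struct L ar (pullback L ar F u S)"
    by (rule wf_struct_pullback)
  moreover have "embedding L ar u (pullback L ar F u S) F"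
    using assms(2,3) by (rule embedding_pullback)
  ultimately show ?thesis
    using assms(1) unfolding Age_def embeds_def by auto
qed

section \<open>Homogeneity and the expansion property\<close>

lemma homogeneous_extend:
  assumes hom: "homogeneous L ar F" and "finite K"
    and f: "inj_on f K" "f ` K \<subseteq> univ F" and h: "inj_on h K" "h ` K \<subseteq> univ F"
    and same_rel: "\<And>R xs. R \<in> L \<Longrightarrow> length xs = ar R \<Longrightarrow> set xs \<subseteq> K \<Longrightarrow>
                      rel F R (map f xs) \<longleftrightarrow> rel F R (map h xs)"
  obtains u where "embedding L ar u F F" and "\<And>a. a \<in> K \<Longrightarrow> u (f a) = h a"
proof -
  define m where "m = h \<circ> inv_into K f"
  have m_f: "m (f a) = h a" if "a \<in> K" for a
    using f(1) that by (simp add: m_def)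
  have bij: "bij_betw m (f ` K) (h ` K)"
    unfolding m_def
    by (rule bij_betw_trans[OF bij_betw_inv_into[OF inj_on_imp_bij_betw[OF f(1)]] inj_on_imp_bij_betw[OF h(1)]])
  have "embedding L ar m (induced F (f ` K)) (induced F (h ` K))"
    unfolding embedding_def
  proof (intro conjI ballI allI impI)
    show "inj_on m (univ (induced F (f ` K)))" "m ` univ (induced F (f ` K)) \<subseteq> univ (induced F (h ` K))"
      using bij by (auto simp: bij_betw_def)
    fix R ys
    assume R: "R \<in> L" and ys: "length ys = ar R \<and> set ys \<subseteq> univ (induced F (f ` K))"
    define xs where "xs = map (inv_into K f) ys"
    have "ys = map f xs"
      unfolding xs_def using ys by (auto simp: f_inv_into_f intro!: map_idI[symmetric])
    moreover have "set xs \<subseteq> K" and m_ys: "map m ys = map h xs"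
      using ys by (auto simp: xs_def m_def inv_into_into)
    moreover have "length xs = ar R"
      using ys by (simp add: xs_def)
    ultimately show "rel (induced F (f ` K)) R ys \<longleftrightarrow> rel (induced F (h ` K)) R (map m ys)"
      unfolding m_ys using same_rel[OF R] by auto
  qed
  moreover have "finite (f ` K)"
    using \<open>finite K\<close> by simp
  ultimately obtain u where "embedding L ar u F F" "\<forall>x\<in>f ` K. u x = m x"
    using hom[unfolded homogeneous_def, rule_format, of "f ` K" "h ` K" m] f(2) h(2) bij by blast
  then show thesis
    using that m_f by simp
qed

lemma embedding_cong:
  assumes "\<And>a. a \<in> univ A \<Longrightarrow> f a = g a"
  shows "embedding L ar f A B \<longleftrightarrow> embedding L ar g A B"
proof -
  have "map f xs = map g xs" if "set xs \<subseteq> univ A" for xs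
    using assms that by (auto simp: subset_iff)
  moreover have "inj_on f (univ A) \<longleftrightarrow> inj_on g (univ A)" "f ` univ A = g ` univ A"
    using assms by (simp_all cong: inj_on_cong image_cong)
  ultimately show ?thesis
    unfolding embedding_def by metis
qed

lemma embedding_pullbacks_eq:
  assumes "embedding L ar \<psi> (pullback L ar F u S) (pullback L ar F v S')"
  shows "pullback L ar F u S = pullback L ar F (v \<circ> \<psi>) S"
proof -
  have "\<psi> ` S \<subseteq> S'"
    using assms by (simp add: embedding_def)
  then show ?thesis
    using pullback_embedding[OF assms] pullback_pullback[of \<psi> S S' L ar F v] pullback_pullback[of id S S L ar F u]
    by simp
qed

text \<open>One witness \<open>B\<^sub>0\<close> serves all images of the finite set under automorphisms \<open>u\<close>: they
  all carry the same \<open>L\<close>-structure.\<close>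

lemma expansion_property_pullback_nat:
  fixes N :: "nat set"
  assumes EP: "expansion_property L Lstar ar (Age L ar (reduct L F)) (Age Lstar ar F)"
    and "L \<subseteq> Lstar" and "finite N" and j: "inj_on j N" "j ` N \<subseteq> univ F"
  obtains B0 where "B0 \<in> Age L ar (reduct L F)"
    and "\<And>u v. embedding L ar u (reduct L F) (reduct L F) \<Longrightarrow> embedding L ar v B0 (reduct L F) \<Longrightarrow>
           embeds Lstar ar (pullback Lstar ar F (u \<circ> j) N) (pullback Lstar ar F v (univ B0))"
proof -
  define A0 where "A0 = pullback L ar F j N"
  have "A0 = pullback L ar (reduct L F) j N"
    by (simp add: A0_def pullback_reduct)
  then have "A0 \<in> Age L ar (reduct L F)"
    using pullback_in_Age[OF \<open>finite N\<close> j(1), of "reduct L F"] j(2) by simp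
  then obtain B0 where B0: "B0 \<in> Age L ar (reduct L F)"
    and ext: "\<And>As Bs. As \<in> Age Lstar ar F \<Longrightarrow> Bs \<in> Age Lstar ar F \<Longrightarrow>
                reduct L As = A0 \<Longrightarrow> reduct L Bs = B0 \<Longrightarrow> embeds Lstar ar As Bs"
    using EP unfolding expansion_property_def by blast
  show thesis
  proof (rule that[OF B0])
    fix u v
    assume u: "embedding L ar u (reduct L F) (reduct L F)" and v: "embedding L ar v B0 (reduct L F)"
    have "inj_on (u \<circ> j) N" "(u \<circ> j) ` N \<subseteq> univ F"
      using u j by (auto simp: embedding_def intro: comp_inj_on inj_on_subset)
    then have "pullback Lstar ar F (u \<circ> j) N \<in> Age Lstar ar F"
      by (rule pullback_in_Age[OF \<open>finite N\<close>])
    moreover have "pullback Lstar ar F v (univ B0) \<in> Age Lstar ar F"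
      using B0 v by (intro pullback_in_Age) (simp_all add: Age_def embedding_def)
    moreover have "reduct L (pullback Lstar ar F (u \<circ> j) N) = A0"
    proof -
      have "pullback L ar F u (j ` N) = pullback L ar F id (j ` N)"
        using pullback_embedding[OF u, of "j ` N"] j(2) by (simp add: pullback_reduct)
      then show ?thesis
        using pullback_pullback[of j N "j ` N" L ar F u] pullback_pullback[of j N "j ` N" L ar F id] \<open>L \<subseteq> Lstar\<close>
        by (simp add: reduct_pullback A0_def)
    qed
    moreover have "reduct L (pullback Lstar ar F v (univ B0)) = B0"
    proof -
      have "reduct L (pullback Lstar ar F v (univ B0)) = pullback L ar (reduct L F) v (univ B0)"
        using \<open>L \<subseteq> Lstar\<close> by (simp add: reduct_pullback pullback_reduct)
      also have "\<dots> = B0"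
        using B0 embedding_eq_pullback[OF _ v, symmetric] by (simp add: Age_def)
      finally show ?thesis .
    qed
    ultimately show "embeds Lstar ar (pullback Lstar ar F (u \<circ> j) N) (pullback Lstar ar F v (univ B0))"
      by (rule ext)
  qed
qed

lemma expansion_property_pullback:
  assumes EP: "expansion_property L Lstar ar (Age L ar (reduct L F)) (Age Lstar ar F)"
    and "L \<subseteq> Lstar" and S: "finite S" "S \<subseteq> univ F"
  obtains B0 where "B0 \<in> Age L ar (reduct L F)"
    and "\<And>u v. embedding L ar u (reduct L F) (reduct L F) \<Longrightarrow> embedding L ar v B0 (reduct L F) \<Longrightarrow>
           \<exists>\<psi>. embedding Lstar ar \<psi> (pullback Lstar ar F u S) (pullback Lstar ar F v (univ B0))"
proof -
  define \<iota> where "\<iota> = to_nat_on S"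
  define j where "j = inv_into S \<iota>"
  have \<iota>: "inj_on \<iota> S"
    using S by (simp add: \<iota>_def inj_on_to_nat_on countable_finite)
  then have j: "inj_on j (\<iota> ` S)" "j ` \<iota> ` S = S" "\<And>x. x \<in> S \<Longrightarrow> j (\<iota> x) = x"
    by (auto simp: j_def inj_on_inv_into)
  obtain B0 where B0: "B0 \<in> Age L ar (reduct L F)"
    and ext: "\<And>u v. embedding L ar u (reduct L F) (reduct L F) \<Longrightarrow> embedding L ar v B0 (reduct L F) \<Longrightarrow>
                embeds Lstar ar (pullback Lstar ar F (u \<circ> j) (\<iota> ` S)) (pullback Lstar ar F v (univ B0))"
    using expansion_property_pullback_nat[OF EP \<open>L \<subseteq> Lstar\<close> _ j(1)] S j(2) by blast
  show thesis
  proof (rule that[OF B0])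
    fix u v
    assume "embedding L ar u (reduct L F) (reduct L F)" and "embedding L ar v B0 (reduct L F)"
    then obtain \<psi> where
      "embedding Lstar ar \<psi> (pullback Lstar ar F (u \<circ> j) (\<iota> ` S)) (pullback Lstar ar F v (univ B0))"
      using ext unfolding embeds_def by blast
    moreover have "pullback Lstar ar F (u \<circ> j \<circ> \<iota>) S = pullback Lstar ar F u S"
      using j(3) by (intro pullback_cong) simp
    then have "embedding Lstar ar \<iota> (pullback Lstar ar F u S) (pullback Lstar ar F (u \<circ> j) (\<iota> ` S))"
      using embedding_into_pullback[OF \<iota>, of "\<iota> ` S" Lstar ar F "u \<circ> j"] by simp
    ultimately show "\<exists>\<psi>. embedding Lstar ar \<psi> (pullback Lstar ar F u S) (pullback Lstar ar F v (univ B0))"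
      using embedding_comp by blast
  qed
qed

section \<open>Blocks of \<open>I\<^sub>n[T\<^sup>*]\<close>\<close>

lemma tournament_total:
  "tournament E F \<Longrightarrow> x \<in> univ F \<Longrightarrow> y \<in> univ F \<Longrightarrow> x \<noteq> y \<Longrightarrow> rel F E [x, y] \<or> rel F E [y, x]"
  unfolding tournament_def by blast

lemma univ_In_star [simp]: "univ (In_star L ar Lt n T) = {..<n} \<times> univ T"
  by (simp add: In_star_def)

lemma In_arity_Inl [simp]: "In_arity ar (Inl R) = ar R"
  by (simp add: In_arity_def)

text \<open>The \<open>i\<close>-th copy of \<open>b\<close> is coded as \<open>prod_encode (i, b)\<close>, as members of an age have
  universes of natural numbers.\<close>

definition copies :: "'r \<Rightarrow> nat \<Rightarrow> (nat, 'r) struct \<Rightarrow> (nat, 'r + nat) struct"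
  where "copies E n B =
    (prod_encode ` ({..<n} \<times> univ B),
     \<lambda>R xs. R = Inl E \<and>
       (\<exists>i b c. i < n \<and> b \<in> univ B \<and> c \<in> univ B \<and> xs = [prod_encode (i, b), prod_encode (i, c)] \<and> rel B E [b, c]))"

lemma univ_copies [simp]: "univ (copies E n B) = prod_encode ` ({..<n} \<times> univ B)"
  by (simp add: copies_def)

lemma rel_copies_E:
  "rel (copies E n B) (Inl E) [prod_encode (i, b), prod_encode (j, c)] \<longleftrightarrow>
     i < n \<and> b \<in> univ B \<and> c \<in> univ B \<and> i = j \<and> rel B E [b, c]"
  by (auto simp: copies_def prod_encode_eq)

lemma wf_struct_copies: "ar E = 2 \<Longrightarrow> wf_struct {Inl E} (In_arity ar) (copies E n B)"
  by (auto simp: wf_struct_def copies_def)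

lemma inj_on_snd_comp:
  assumes "inj_on h K" and "\<And>a b. a \<in> K \<Longrightarrow> b \<in> K \<Longrightarrow> fst (h a) = fst (h b)"
  shows "inj_on (snd \<circ> h) K"
proof (rule inj_onI)
  fix a b
  assume "a \<in> K" "b \<in> K" "(snd \<circ> h) a = (snd \<circ> h) b"
  then have "h a = h b"
    using assms(2)[of a b] by (simp add: prod_eq_iff)
  then show "a = b"
    using \<open>a \<in> K\<close> \<open>b \<in> K\<close> by (rule inj_onD[OF assms(1)])
qed

locale In_star_setting =
  fixes LT :: "'r set" and ar :: "'r \<Rightarrow> nat" and E Lt :: 'r and T :: "('a, 'r) struct" and n :: nat
  assumes E_in_LT: "E \<in> LT" and E_neq_Lt: "E \<noteq> Lt" and arity_E: "ar E = 2" and arity_Lt: "ar Lt = 2"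
    and tournament: "tournament E (reduct {E} T)"
begin

abbreviation I :: "(nat \<times> 'a, 'r + nat) struct"
  where "I \<equiv> In_star LT ar Lt n T"

lemma rel_I_E:
  "rel I (Inl E) [p, q] \<longleftrightarrow> p \<in> univ I \<and> q \<in> univ I \<and> fst p = fst q \<and> rel T E [snd p, snd q]"
  by (cases p, cases q) (auto simp: In_star_def E_in_LT E_neq_Lt arity_E)

lemma rel_I_Lt:
  "rel I (Inl Lt) [p, q] \<longleftrightarrow>
     p \<in> univ I \<and> q \<in> univ I \<and> Lt \<in> LT \<and> (fst p < fst q \<or> fst p = fst q \<and> rel T Lt [snd p, snd q])"
  by (cases p, cases q) (auto simp: In_star_def)

lemma same_block_iff_adjacent:
  assumes "p \<in> univ I" and "q \<in> univ I" and "p \<noteq> q"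
  shows "fst p = fst q \<longleftrightarrow> rel I (Inl E) [p, q] \<or> rel I (Inl E) [q, p]"
proof -
  obtain i x j y where pq: "p = (i, x)" "q = (j, y)"
    by (cases p, cases q)
  have "i = j \<Longrightarrow> rel T E [x, y] \<or> rel T E [y, x]"
    using tournament_total[OF tournament, of x y] assms pq by auto
  then show ?thesis
    using assms pq by (auto simp: rel_I_E)
qed

lemma rel_I_transfer:
  assumes "set ps \<subseteq> univ I" and "set qs \<subseteq> univ I" and fst_eq: "map fst ps = map fst qs"
    and snd_rel: "\<And>R. \<Sigma> = Inl R \<Longrightarrow> R \<in> LT \<Longrightarrow> length ps = ar R \<Longrightarrow> (\<forall>p\<in>set ps. \<forall>q\<in>set ps. fst p = fst q) \<Longrightarrow>
                   rel T R (map snd ps) \<longleftrightarrow> rel T R (map snd qs)"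
  shows "rel I \<Sigma> ps \<longleftrightarrow> rel I \<Sigma> qs"
proof -
  have len: "length ps = length qs"
    using fst_eq by (metis length_map)
  have one_block: "(\<exists>k. \<forall>p\<in>set ps. fst p = k) \<longleftrightarrow> (\<exists>k. \<forall>q\<in>set qs. fst q = k)"
    using arg_cong[OF fst_eq, of set] by (metis (mono_tags, lifting) image_iff list.set_map)
  show ?thesis
  proof (cases \<Sigma>)
    case (Inr i)
    then show ?thesis
      using assms len by (auto simp: In_star_def length_Suc_conv)
  next
    case (Inl R)
    show ?thesis
    proof (cases "R = Lt")
      case True
      show ?thesis
      proof (cases "length ps = 2")
        case True
        then obtain p1 p2 q1 q2 where ps: "ps = [p1, p2]" and qs: "qs = [q1, q2]"
          using len by (metis length_eq_2_conv)
        have "fst p1 = fst q1" "fst p2 = fst q2"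
          using fst_eq ps qs by simp_all
        moreover have "fst p1 = fst p2 \<Longrightarrow> Lt \<in> LT \<Longrightarrow> rel T Lt [snd p1, snd p2] \<longleftrightarrow> rel T Lt [snd q1, snd q2]"
          using snd_rel[of Lt] Inl \<open>R = Lt\<close> ps qs arity_Lt by simp
        ultimately show ?thesis
          using assms(1,2) Inl \<open>R = Lt\<close> ps qs by (auto simp: rel_I_Lt)
      next
        case False
        then show ?thesis
          using Inl \<open>R = Lt\<close> len by (auto simp: In_star_def)
      qed
    next
      case False
      then show ?thesis
        using assms Inl len one_block by (auto simp: In_star_def)
    qed
  qed
qed

lemma embedding_I_transfer:
  assumes h: "embedding (In_lang LT n) (In_arity ar) h A I"
    and g: "inj_on g (univ A)" "g ` univ A \<subseteq> univ I"
    and fst_eq: "\<And>a. a \<in> univ A \<Longrightarrow> fst (g a) = fst (h a)"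
    and snd_rel: "\<And>R xs. R \<in> LT \<Longrightarrow> length xs = ar R \<Longrightarrow> set xs \<subseteq> univ A \<Longrightarrow>
                    \<forall>x\<in>set xs. \<forall>y\<in>set xs. fst (h x) = fst (h y) \<Longrightarrow>
                    rel T R (map (snd \<circ> h) xs) \<longleftrightarrow> rel T R (map (snd \<circ> g) xs)"
  shows "embedding (In_lang LT n) (In_arity ar) g A I"
  unfolding embedding_def
proof (intro conjI ballI allI impI)
  show "inj_on g (univ A)" "g ` univ A \<subseteq> univ I"
    using g by simp_all
  fix \<Sigma> xs
  assume \<Sigma>: "\<Sigma> \<in> In_lang LT n" and xs: "length xs = In_arity ar \<Sigma> \<and> set xs \<subseteq> univ A"
  have "rel I \<Sigma> (map h xs) \<longleftrightarrow> rel I \<Sigma> (map g xs)"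
  proof (rule rel_I_transfer)
    show "set (map h xs) \<subseteq> univ I"
      using h xs by (auto simp: embedding_def)
    show "set (map g xs) \<subseteq> univ I"
      using g xs by auto
    show "map fst (map h xs) = map fst (map g xs)"
      using fst_eq xs by auto
    fix R
    assume R: "R \<in> LT" and len: "length (map h xs) = ar R"
      and one_block: "\<forall>p\<in>set (map h xs). \<forall>q\<in>set (map h xs). fst p = fst q"
    have "\<forall>x\<in>set xs. \<forall>y\<in>set xs. fst (h x) = fst (h y)"
      using one_block by (metis image_eqI set_map)
    from snd_rel[OF R _ _ this] show "rel T R (map snd (map h xs)) \<longleftrightarrow> rel T R (map snd (map g xs))"
      using len xs by simp
  qed
  then show "rel A \<Sigma> xs \<longleftrightarrow> rel I \<Sigma> (map g xs)"
    using embedding_relD[OF h \<Sigma>] xs by simp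
qed

lemma embedding_rel_E_iff:
  assumes h: "embedding {Inl E} (In_arity ar) h A (reduct {Inl E} I)" and "a \<in> univ A" "b \<in> univ A"
  shows "rel A (Inl E) [a, b] \<longleftrightarrow> rel I (Inl E) [h a, h b]"
  using embedding_relD[OF h, of "Inl E" "[a, b]"] assms by (simp add: arity_E)

lemma embedding_same_block_iff:
  assumes h: "embedding {Inl E} (In_arity ar) h A (reduct {Inl E} I)" and "a \<in> univ A" "b \<in> univ A"
  shows "fst (h a) = fst (h b) \<longleftrightarrow> a = b \<or> rel A (Inl E) [a, b] \<or> rel A (Inl E) [b, a]"
proof (cases "a = b")
  case False
  then have "h a \<in> univ I" "h b \<in> univ I" "h a \<noteq> h b"
    using h assms by (auto simp: embedding_def inj_on_def)
  then show ?thesis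
    using same_block_iff_adjacent embedding_rel_E_iff[OF h] assms False by simp
qed simp

lemma embedding_rel_E_within_block:
  assumes h: "embedding {Inl E} (In_arity ar) h A (reduct {Inl E} I)" and "a \<in> univ A" "b \<in> univ A"
    and "fst (h a) = fst (h b)"
  shows "rel A (Inl E) [a, b] \<longleftrightarrow> rel T E [snd (h a), snd (h b)]"
proof -
  have "h a \<in> univ I" "h b \<in> univ I"
    using h assms by (auto simp: embedding_def)
  then show ?thesis
    using embedding_rel_E_iff[OF h] assms by (simp add: rel_I_E)
qed

lemma Age_rel_E_total:
  assumes "B \<in> Age {E} ar (reduct {E} T)" and "b \<in> univ B" "c \<in> univ B" "b \<noteq> c"
  shows "rel B E [b, c] \<or> rel B E [c, b]"
proof -
  obtain g where g: "embedding {E} ar g B (reduct {E} T)"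
    using assms(1) by (auto simp: Age_def embeds_def)
  then have "g b \<noteq> g c" "g b \<in> univ T" "g c \<in> univ T"
    using assms by (auto simp: embedding_def inj_on_def)
  then show ?thesis
    using tournament_total[OF tournament, of "g b" "g c"] assms
      embedding_relD[OF g, of E "[b, c]"] embedding_relD[OF g, of E "[c, b]"]
    by (simp add: arity_E)
qed

lemma copies_in_Age:
  assumes "B \<in> Age {E} ar (reduct {E} T)"
  shows "copies E n B \<in> Age {Inl E} (In_arity ar) (reduct {Inl E} I)"
proof -
  obtain g where "finite (univ B)" and g: "embedding {E} ar g B (reduct {E} T)"
    using assms by (auto simp: Age_def embeds_def)
  define e where "e = map_prod id g \<circ> prod_decode"
  have e_encode [simp]: "e (prod_encode (i, b)) = (i, g b)" for i b
    by (simp add: e_def)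
  have "embedding {Inl E} (In_arity ar) e (copies E n B) (reduct {Inl E} I)"
    unfolding embedding_def
  proof (intro conjI ballI allI impI)
    have "inj_on (map_prod id g) ({..<n} \<times> univ B)"
      using g by (auto simp: embedding_def intro: map_prod_inj_on)
    then show "inj_on e (univ (copies E n B))"
      unfolding univ_copies by (intro inj_on_imageI) (simp add: e_def comp_def)
    show "e ` univ (copies E n B) \<subseteq> univ (reduct {Inl E} I)"
      using g by (auto simp: embedding_def)
    fix R xs
    assume R: "R \<in> {Inl E}" and xs: "length xs = In_arity ar R \<and> set xs \<subseteq> univ (copies E n B)"
    then obtain i b j c where ij: "i < n" "j < n" and bc: "b \<in> univ B" "c \<in> univ B"
      and xs_eq: "xs = [prod_encode (i, b), prod_encode (j, c)]"
      by (auto simp: arity_E length_eq_2_conv)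
    have "g b \<in> univ T" "g c \<in> univ T"
      using g bc by (auto simp: embedding_def)
    then show "rel (copies E n B) R xs \<longleftrightarrow> rel (reduct {Inl E} I) R (map e xs)"
      using R ij bc embedding_relD[OF g, of E "[b, c]"]
      by (auto simp: xs_eq rel_copies_E rel_I_E arity_E)
  qed
  then show ?thesis
    using \<open>finite (univ B)\<close> wf_struct_copies[of ar E n B, OF arity_E] by (auto simp: Age_def embeds_def)
qed

lemma copies_same_block_iff:
  assumes "B \<in> Age {E} ar (reduct {E} T)"
    and k: "embedding {Inl E} (In_arity ar) k (copies E n B) (reduct {Inl E} I)"
    and "i < n" "j < n" "b \<in> univ B" "c \<in> univ B"
  shows "fst (k (prod_encode (i, b))) = fst (k (prod_encode (j, c))) \<longleftrightarrow> i = j"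
  using embedding_same_block_iff[OF k, of "prod_encode (i, b)" "prod_encode (j, c)"]
    Age_rel_E_total[OF assms(1), of b c] assms(3-)
  by (auto simp: rel_copies_E prod_encode_eq)

lemma copies_embedding_copy:
  assumes B: "B \<in> Age {E} ar (reduct {E} T)"
    and k: "embedding {Inl E} (In_arity ar) k (copies E n B) (reduct {Inl E} I)" and i: "i < n"
  shows "embedding {E} ar (\<lambda>b. snd (k (prod_encode (i, b)))) B (reduct {E} T)"
proof -
  define \<kappa> where "\<kappa> = (\<lambda>b. k (prod_encode (i, b)))"
  have \<kappa>_in: "\<kappa> b \<in> univ I" if "b \<in> univ B" for b
    using k i that by (auto simp: \<kappa>_def embedding_def)
  have same_block: "fst (\<kappa> b) = fst (\<kappa> c)" if "b \<in> univ B" "c \<in> univ B" for b c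
    using copies_same_block_iff[OF B k i i that] by (simp add: \<kappa>_def)
  have "inj_on (k \<circ> (\<lambda>b. prod_encode (i, b))) (univ B)"
  proof (rule comp_inj_on)
    show "inj_on (\<lambda>b. prod_encode (i, b)) (univ B)"
      by (auto simp: inj_on_def prod_encode_eq)
    have "(\<lambda>b. prod_encode (i, b)) ` univ B \<subseteq> univ (copies E n B)"
      using i by auto
    then show "inj_on k ((\<lambda>b. prod_encode (i, b)) ` univ B)"
      using k by (auto simp: embedding_def intro: inj_on_subset)
  qed
  then have "inj_on \<kappa> (univ B)"
    by (simp add: \<kappa>_def comp_def)
  then have "inj_on (snd \<circ> \<kappa>) (univ B)"
    using same_block by (rule inj_on_snd_comp)
  moreover have "rel B E [b, c] \<longleftrightarrow> rel T E [snd (\<kappa> b), snd (\<kappa> c)]" if "b \<in> univ B" "c \<in> univ B" for b c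
    using embedding_rel_E_iff[OF k, of "prod_encode (i, b)" "prod_encode (i, c)"] i that
      same_block[OF that] \<kappa>_in[OF that(1)] \<kappa>_in[OF that(2)]
    by (simp add: rel_copies_E rel_I_E \<kappa>_def)
  ultimately have "embedding {E} ar (snd \<circ> \<kappa>) B (reduct {E} T)"
    using \<kappa>_in unfolding embedding_def by (auto simp: arity_E length_eq_2_conv mem_Times_iff)
  then show ?thesis
    by (simp add: \<kappa>_def comp_def)
qed

lemma copies_embedding_decompose:
  assumes B: "B \<in> Age {E} ar (reduct {E} T)"
    and k: "embedding {Inl E} (In_arity ar) k (copies E n B) (reduct {Inl E} I)"
  obtains \<pi> v where "bij_betw \<pi> {..<n} {..<n}"
    and "\<And>i b. i < n \<Longrightarrow> b \<in> univ B \<Longrightarrow> k (prod_encode (i, b)) = (\<pi> i, v i b)"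
    and "\<And>i. i < n \<Longrightarrow> embedding {E} ar (v i) B (reduct {E} T)"
proof -
  define v where "v = (\<lambda>i b. snd (k (prod_encode (i, b))))"
  have v: "embedding {E} ar (v i) B (reduct {E} T)" if "i < n" for i
    using copies_embedding_copy[OF B k that] by (simp add: v_def)
  show thesis
  proof (cases "univ B = {}")
    case True
    show thesis
      by (rule that[of id v]) (simp_all add: True v)
  next
    case False
    then obtain b0 where b0: "b0 \<in> univ B"
      by blast
    define \<pi> where "\<pi> i = fst (k (prod_encode (i, b0)))" for i
    have k_eq: "k (prod_encode (i, b)) = (\<pi> i, v i b)" if "i < n" "b \<in> univ B" for i b
      using copies_same_block_iff[OF B k that(1) that(1) that(2) b0] by (simp add: \<pi>_def v_def prod_eq_iff)
    have "inj_on \<pi> {..<n}"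
      using copies_same_block_iff[OF B k _ _ b0 b0] by (auto simp: inj_on_def \<pi>_def)
    moreover have "k (prod_encode (i, b0)) \<in> univ I" if "i < n" for i
      using k b0 that by (auto simp: embedding_def)
    then have "\<pi> ` {..<n} \<subseteq> {..<n}"
      by (auto simp: \<pi>_def mem_Times_iff)
    ultimately have "bij_betw \<pi> {..<n} {..<n}"
      by (simp add: bij_betw_def endo_inj_surj)
    then show thesis
      using that k_eq v by blast
  qed
qed

lemma block_automorphism:
  assumes hom: "homogeneous {E} ar (reduct {E} T)" and "finite (univ A)"
    and f: "embedding {Inl E} (In_arity ar) f A (reduct {Inl E} I)"
    and h: "embedding {Inl E} (In_arity ar) h A (reduct {Inl E} I)"
  obtains u where "embedding {E} ar u (reduct {E} T) (reduct {E} T)"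
    and "\<And>a. a \<in> univ A \<Longrightarrow> fst (f a) = p \<Longrightarrow> u (snd (f a)) = snd (h a)"
proof -
  define K where "K = {a \<in> univ A. fst (f a) = p}"
  have "finite K"
    using \<open>finite (univ A)\<close> by (simp add: K_def)
  have same_block: "fst (h a) = fst (h b)" if "a \<in> K" "b \<in> K" for a b
    using that embedding_same_block_iff[OF f] embedding_same_block_iff[OF h] by (auto simp: K_def)
  have f_inj: "inj_on (snd \<circ> f) K" and h_inj: "inj_on (snd \<circ> h) K"
    using f h same_block
    by (auto simp: K_def embedding_def intro!: inj_on_snd_comp intro: inj_on_subset)
  have f_img: "(snd \<circ> f) ` K \<subseteq> univ (reduct {E} T)" and h_img: "(snd \<circ> h) ` K \<subseteq> univ (reduct {E} T)"
    using f h by (auto simp: K_def embedding_def)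
  have same_rel: "rel (reduct {E} T) R (map (snd \<circ> f) xs) \<longleftrightarrow> rel (reduct {E} T) R (map (snd \<circ> h) xs)"
    if R: "R \<in> {E}" and len: "length xs = ar R" and xs: "set xs \<subseteq> K" for R xs
  proof -
    obtain a b where "xs = [a, b]"
      using R len by (auto simp: arity_E length_eq_2_conv)
    then show ?thesis
      using R xs same_block embedding_rel_E_within_block[OF f, of a b] embedding_rel_E_within_block[OF h, of a b]
      by (auto simp: K_def)
  qed
  obtain u where "embedding {E} ar u (reduct {E} T) (reduct {E} T)"
    and "\<And>a. a \<in> K \<Longrightarrow> u ((snd \<circ> f) a) = (snd \<circ> h) a"
    using homogeneous_extend[OF hom \<open>finite K\<close> f_inj f_img h_inj h_img same_rel] by blast
  then show thesis
    using that by (simp add: K_def)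
qed

lemma block_automorphisms:
  assumes hom: "homogeneous {E} ar (reduct {E} T)" and "finite (univ A)"
    and f: "embedding {Inl E} (In_arity ar) f A (reduct {Inl E} I)"
    and h: "embedding {Inl E} (In_arity ar) h A (reduct {Inl E} I)"
  obtains u where "\<And>p. embedding {E} ar (u p) (reduct {E} T) (reduct {E} T)"
    and "\<And>a. a \<in> univ A \<Longrightarrow> u (fst (f a)) (snd (f a)) = snd (h a)"
proof -
  have "\<forall>p. \<exists>u. embedding {E} ar u (reduct {E} T) (reduct {E} T) \<and>
                (\<forall>a\<in>univ A. fst (f a) = p \<longrightarrow> u (snd (f a)) = snd (h a))"
    using block_automorphism[OF assms] by metis
  then obtain u where "\<forall>p. embedding {E} ar (u p) (reduct {E} T) (reduct {E} T) \<and>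
                          (\<forall>a\<in>univ A. fst (f a) = p \<longrightarrow> u p (snd (f a)) = snd (h a))"
    by (rule choice[THEN exE])
  then show thesis
    using that by blast
qed

lemma embedding_reduct_E:
  "embedding (In_lang LT n) (In_arity ar) h A I \<Longrightarrow>
     embedding {Inl E} (In_arity ar) h (reduct {Inl E} A) (reduct {Inl E} I)"
  using E_in_LT by (intro embedding_reduct) (auto simp: In_lang_def)

text \<open>Re-embedding \<open>A\<close> block by block: keep the blocks of \<open>h\<close> and replace the
  \<open>T\<close>-coordinates by maps \<open>W p q\<close> realising on \<open>S\<close> the same \<open>LT\<close>-type as \<open>u p\<close>.\<close>

context
  fixes h :: "'b \<Rightarrow> nat \<times> 'a" and f and A :: "('b, 'r + nat) struct"
    and u :: "nat \<Rightarrow> 'a \<Rightarrow> 'a" and W :: "nat \<Rightarrow> nat \<Rightarrow> 'a \<Rightarrow> 'a" and S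
  assumes h: "embedding (In_lang LT n) (In_arity ar) h A I"
    and f: "embedding {Inl E} (In_arity ar) f (reduct {Inl E} A) (reduct {Inl E} I)"
    and u_f: "\<And>a. a \<in> univ A \<Longrightarrow> u (fst (f a)) (snd (f a)) = snd (h a)"
    and S: "snd ` f ` univ A \<subseteq> S"
    and W_inj: "\<And>p q. q < n \<Longrightarrow> inj_on (W p q) S"
    and W_img: "\<And>p q. q < n \<Longrightarrow> W p q ` S \<subseteq> univ T"
    and W_rel: "\<And>p q. q < n \<Longrightarrow> pullback LT ar T (u p) S = pullback LT ar T (W p q) S"
begin

lemma blockwise_same_block:
  "a \<in> univ A \<Longrightarrow> b \<in> univ A \<Longrightarrow> fst (f a) = fst (f b) \<longleftrightarrow> fst (h a) = fst (h b)"
  using embedding_same_block_iff[OF f] embedding_same_block_iff[OF embedding_reduct_E[OF h]] by simp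

lemma blockwise_block: "a \<in> univ A \<Longrightarrow> fst (h a) < n"
  using h by (auto simp: embedding_def mem_Times_iff)

lemma blockwise_inj: "inj_on (\<lambda>a. (fst (h a), W (fst (f a)) (fst (h a)) (snd (f a)))) (univ A)"
proof (rule inj_onI)
  fix a b
  assume a: "a \<in> univ A" and b: "b \<in> univ A"
    and "(fst (h a), W (fst (f a)) (fst (h a)) (snd (f a))) = (fst (h b), W (fst (f b)) (fst (h b)) (snd (f b)))"
  then have hab: "fst (h a) = fst (h b)"
    and W_eq: "W (fst (f a)) (fst (h a)) (snd (f a)) = W (fst (f b)) (fst (h b)) (snd (f b))"
    unfolding prod.inject by blast+
  then have fab: "fst (f a) = fst (f b)"
    using blockwise_same_block[OF a b] by simp
  have "W (fst (f a)) (fst (h a)) (snd (f a)) = W (fst (f a)) (fst (h a)) (snd (f b))"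
    using W_eq fab hab by metis
  moreover have "snd (f a) \<in> S" "snd (f b) \<in> S"
    using S a b by auto
  ultimately have "snd (f a) = snd (f b)"
    using W_inj[OF blockwise_block[OF a]] by (blast dest: inj_onD)
  with fab have "f a = f b"
    by (simp add: prod_eq_iff)
  then show "a = b"
    using f a b by (auto simp: embedding_def dest: inj_onD)
qed

lemma blockwise_rel:
  assumes R: "R \<in> LT" and len: "length xs = ar R" and xs: "set xs \<subseteq> univ A"
    and one_block: "\<forall>x\<in>set xs. \<forall>y\<in>set xs. fst (h x) = fst (h y)"
  shows "rel T R (map (snd \<circ> h) xs) \<longleftrightarrow> rel T R (map (\<lambda>a. W (fst (f a)) (fst (h a)) (snd (f a))) xs)"
proof (cases xs)
  case (Cons a0 xs')
  define p where "p = fst (f a0)"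
  define q where "q = fst (h a0)"
  define ys where "ys = map (snd \<circ> f) xs"
  have a0: "a0 \<in> univ A"
    using xs Cons by simp
  have blocks: "fst (h x) = q" "fst (f x) = p" if "x \<in> set xs" for x
    using one_block that Cons blockwise_same_block[of x a0] a0 xs by (auto simp: p_def q_def)
  have "snd (h x) = u p (snd (f x))" if "x \<in> set xs" for x
    using u_f[of x] blocks(2)[OF that] xs that by auto
  then have "map (snd \<circ> h) xs = map (u p) ys"
    by (simp add: ys_def)
  moreover have "map (\<lambda>a. W (fst (f a)) (fst (h a)) (snd (f a))) xs = map (W p q) ys"
    using blocks by (simp add: ys_def)
  moreover have "set ys \<subseteq> S" "length ys = ar R"
    using xs len S by (auto simp: ys_def)
  ultimately show ?thesis
    using arg_cong[OF W_rel[OF blockwise_block[OF a0], of p], of "\<lambda>F. rel F R ys"] R by (simp add: q_def)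
qed simp

lemma embedding_I_blockwise:
  "embedding (In_lang LT n) (In_arity ar) (\<lambda>a. (fst (h a), W (fst (f a)) (fst (h a)) (snd (f a)))) A I"
proof (rule embedding_I_transfer[OF h blockwise_inj])
  show "(\<lambda>a. (fst (h a), W (fst (f a)) (fst (h a)) (snd (f a)))) ` univ A \<subseteq> univ I"
    using blockwise_block W_img S by fastforce
  show "fst (fst (h a), W (fst (f a)) (fst (h a)) (snd (f a))) = fst (h a)" for a
    by simp
  show "rel T R (map (snd \<circ> h) xs) \<longleftrightarrow> rel T R (map (snd \<circ> (\<lambda>a. (fst (h a), W (fst (f a)) (fst (h a)) (snd (f a))))) xs)"
    if "R \<in> LT" "length xs = ar R" "set xs \<subseteq> univ A" "\<forall>x\<in>set xs. \<forall>y\<in>set xs. fst (h x) = fst (h y)" for R xs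
    using blockwise_rel[OF that] by (simp add: comp_def)
qed

end

lemma copies_targets:
  assumes B0: "B0 \<in> Age {E} ar (reduct {E} T)"
    and B0_ext: "\<And>u v. embedding {E} ar u (reduct {E} T) (reduct {E} T) \<Longrightarrow> embedding {E} ar v B0 (reduct {E} T) \<Longrightarrow>
                   \<exists>\<psi>. embedding LT ar \<psi> (pullback LT ar T u S) (pullback LT ar T v (univ B0))"
    and u: "\<And>p. embedding {E} ar (u p) (reduct {E} T) (reduct {E} T)"
    and k: "embedding {Inl E} (In_arity ar) k (copies E n B0) (reduct {Inl E} I)"
  obtains \<sigma> where "\<And>p q s. q < n \<Longrightarrow> s \<in> S \<Longrightarrow> \<sigma> p q s \<in> univ (copies E n B0) \<and> fst (k (\<sigma> p q s)) = q"
    and "\<And>p q. q < n \<Longrightarrow> inj_on (snd \<circ> k \<circ> \<sigma> p q) S"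
    and "\<And>p q. q < n \<Longrightarrow> pullback LT ar T (u p) S = pullback LT ar T (snd \<circ> k \<circ> \<sigma> p q) S"
proof -
  obtain \<pi> v where \<pi>: "bij_betw \<pi> {..<n} {..<n}"
    and k_copy: "\<And>i b. i < n \<Longrightarrow> b \<in> univ B0 \<Longrightarrow> k (prod_encode (i, b)) = (\<pi> i, v i b)"
    and v: "\<And>i. i < n \<Longrightarrow> embedding {E} ar (v i) B0 (reduct {E} T)"
    using copies_embedding_decompose[OF B0 k] by blast
  define \<Psi> where "\<Psi> p i = (SOME \<psi>. embedding LT ar \<psi> (pullback LT ar T (u p) S) (pullback LT ar T (v i) (univ B0)))"
    for p i
  have \<Psi>: "embedding LT ar (\<Psi> p i) (pullback LT ar T (u p) S) (pullback LT ar T (v i) (univ B0))" if "i < n" for p i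
    unfolding \<Psi>_def using B0_ext[OF u v[OF that]] by (rule someI_ex)
  define c where "c = inv_into {..<n} \<pi>" \<comment> \<open>the copy of \<open>B\<^sub>0\<close> sent to block \<open>q\<close>\<close>
  have c: "c q < n" "\<pi> (c q) = q" if "q < n" for q
  proof -
    have "q \<in> \<pi> ` {..<n}"
      using \<pi> that by (simp add: bij_betw_def)
    then show "c q < n" "\<pi> (c q) = q"
      using inv_into_into[of q \<pi> "{..<n}"] by (simp_all add: c_def f_inv_into_f)
  qed
  define \<sigma> where "\<sigma> p q s = prod_encode (c q, \<Psi> p (c q) s)" for p q s
  have \<Psi>_S: "inj_on (\<Psi> p (c q)) S" "\<Psi> p (c q) ` S \<subseteq> univ B0" if "q < n" for p q
    using \<Psi>[OF c(1)[OF that]] by (simp_all add: embedding_def)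
  have k_\<sigma>: "k (\<sigma> p q s) = (q, (v (c q) \<circ> \<Psi> p (c q)) s)" if "q < n" "s \<in> S" for p q s
    using k_copy[OF c(1)[OF that(1)], of "\<Psi> p (c q) s"] \<Psi>_S(2)[OF that(1)] that c(2) by (auto simp: \<sigma>_def)
  show thesis
  proof (rule that)
    show "\<sigma> p q s \<in> univ (copies E n B0) \<and> fst (k (\<sigma> p q s)) = q" if "q < n" "s \<in> S" for p q s
      using c(1)[OF that(1)] \<Psi>_S(2)[OF that(1), of p] k_\<sigma>[OF that] that(2) by (auto simp: \<sigma>_def)
    fix p q
    assume "q < n"
    then have "c q < n"
      by (rule c(1))
    have "pullback LT ar T (u p) S = pullback LT ar T (v (c q) \<circ> \<Psi> p (c q)) S"
      by (rule embedding_pullbacks_eq[OF \<Psi>[OF \<open>c q < n\<close>]])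
    moreover have "inj_on (v (c q) \<circ> \<Psi> p (c q)) S"
      using \<Psi>_S[OF \<open>q < n\<close>, of p] v[OF \<open>c q < n\<close>]
      by (auto simp: embedding_def intro: comp_inj_on inj_on_subset)
    moreover have "s \<in> S \<Longrightarrow> (snd \<circ> k \<circ> \<sigma> p q) s = (v (c q) \<circ> \<Psi> p (c q)) s" for s
      using k_\<sigma>[OF \<open>q < n\<close>] by simp
    ultimately show "inj_on (snd \<circ> k \<circ> \<sigma> p q) S"
      and "pullback LT ar T (u p) S = pullback LT ar T (snd \<circ> k \<circ> \<sigma> p q) S"
      by (simp_all cong: inj_on_cong pullback_cong)
  qed
qed

lemma expansion_embeds_into_copies:
  assumes hom: "homogeneous {E} ar (reduct {E} T)" and "finite (univ A)"
    and f: "embedding {Inl E} (In_arity ar) f A (reduct {Inl E} I)"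
    and B0: "B0 \<in> Age {E} ar (reduct {E} T)"
    and B0_ext: "\<And>u v. embedding {E} ar u (reduct {E} T) (reduct {E} T) \<Longrightarrow> embedding {E} ar v B0 (reduct {E} T) \<Longrightarrow>
                   \<exists>\<psi>. embedding LT ar \<psi> (pullback LT ar T u (snd ` f ` univ A)) (pullback LT ar T v (univ B0))"
    and h: "embedding (In_lang LT n) (In_arity ar) h As I" and As: "reduct {Inl E} As = A"
    and k: "embedding (In_lang LT n) (In_arity ar) k Bs I" and Bs: "reduct {Inl E} Bs = copies E n B0"
  shows "embeds (In_lang LT n) (In_arity ar) As Bs"
proof -
  have hA: "embedding {Inl E} (In_arity ar) h A (reduct {Inl E} I)"
    using embedding_reduct_E[OF h] unfolding As .
  have kB: "embedding {Inl E} (In_arity ar) k (copies E n B0) (reduct {Inl E} I)"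
    using embedding_reduct_E[OF k] unfolding Bs .
  have univ_As: "univ As = univ A" and univ_Bs: "univ Bs = univ (copies E n B0)"
    using arg_cong[OF As, of univ] arg_cong[OF Bs, of univ] by simp_all
  obtain u where u: "\<And>p. embedding {E} ar (u p) (reduct {E} T) (reduct {E} T)"
    and u_f: "\<And>a. a \<in> univ A \<Longrightarrow> u (fst (f a)) (snd (f a)) = snd (h a)"
    using block_automorphisms[OF hom \<open>finite (univ A)\<close> f hA] by blast
  obtain \<sigma> where \<sigma>: "\<And>p q s. q < n \<Longrightarrow> s \<in> snd ` f ` univ A \<Longrightarrow>
                        \<sigma> p q s \<in> univ (copies E n B0) \<and> fst (k (\<sigma> p q s)) = q"
    and \<sigma>_inj: "\<And>p q. q < n \<Longrightarrow> inj_on (snd \<circ> k \<circ> \<sigma> p q) (snd ` f ` univ A)"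
    and \<sigma>_rel: "\<And>p q. q < n \<Longrightarrow>
                  pullback LT ar T (u p) (snd ` f ` univ A) = pullback LT ar T (snd \<circ> k \<circ> \<sigma> p q) (snd ` f ` univ A)"
    using copies_targets[where u = u, OF B0 B0_ext u kB] by blast
  define \<Phi> where "\<Phi> a = \<sigma> (fst (f a)) (fst (h a)) (snd (f a))" for a
  have h_block: "fst (h a) < n" if "a \<in> univ A" for a
    using h that univ_As by (auto simp: embedding_def mem_Times_iff)
  have \<Phi>_in: "\<Phi> a \<in> univ Bs"
    and k_\<Phi>: "(k \<circ> \<Phi>) a = (fst (h a), (snd \<circ> k \<circ> \<sigma> (fst (f a)) (fst (h a))) (snd (f a)))"
    if "a \<in> univ As" for a
    using \<sigma>[OF h_block, of a "snd (f a)" "fst (f a)"] that by (simp_all add: \<Phi>_def univ_As univ_Bs prod_eq_iff)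
  have "embedding (In_lang LT n) (In_arity ar)
          (\<lambda>a. (fst (h a), (snd \<circ> k \<circ> \<sigma> (fst (f a)) (fst (h a))) (snd (f a)))) As I"
  proof (rule embedding_I_blockwise[OF h])
    show "embedding {Inl E} (In_arity ar) f (reduct {Inl E} As) (reduct {Inl E} I)"
      unfolding As by (rule f)
    show "u (fst (f a)) (snd (f a)) = snd (h a)" if "a \<in> univ As" for a
      using u_f that by (simp add: univ_As)
    show "snd ` f ` univ As \<subseteq> snd ` f ` univ A"
      by (simp add: univ_As)
    fix p q
    assume "q < n"
    show "inj_on (snd \<circ> k \<circ> \<sigma> p q) (snd ` f ` univ A)"
      using \<sigma>_inj[OF \<open>q < n\<close>] .
    show "pullback LT ar T (u p) (snd ` f ` univ A) = pullback LT ar T (snd \<circ> k \<circ> \<sigma> p q) (snd ` f ` univ A)"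
      using \<sigma>_rel[OF \<open>q < n\<close>] .
    have "k (\<sigma> p q s) \<in> univ I" if "s \<in> snd ` f ` univ A" for s
      using \<sigma>[OF \<open>q < n\<close> that] k univ_Bs by (auto simp: embedding_def)
    then show "(snd \<circ> k \<circ> \<sigma> p q) ` snd ` f ` univ A \<subseteq> univ T"
      by (auto simp: mem_Times_iff)
  qed
  moreover have "embedding (In_lang LT n) (In_arity ar) (k \<circ> \<Phi>) As I \<longleftrightarrow>
      embedding (In_lang LT n) (In_arity ar)
        (\<lambda>a. (fst (h a), (snd \<circ> k \<circ> \<sigma> (fst (f a)) (fst (h a))) (snd (f a)))) As I"
    using k_\<Phi> by (rule embedding_cong)
  ultimately have "embedding (In_lang LT n) (In_arity ar) (k \<circ> \<Phi>) As I"
    by blast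
  then show ?thesis
    using embedding_cancel[OF k] \<Phi>_in unfolding embeds_def by blast
qed

theorem expansion_property_In_star:
  assumes hom: "homogeneous {E} ar (reduct {E} T)"
    and EP: "expansion_property {E} LT ar (Age {E} ar (reduct {E} T)) (Age LT ar T)"
  shows "expansion_property {Inl E} (In_lang LT n) (In_arity ar)
           (Age {Inl E} (In_arity ar) (reduct {Inl E} I)) (Age (In_lang LT n) (In_arity ar) I)"
  unfolding expansion_property_def
proof
  fix A
  assume "A \<in> Age {Inl E} (In_arity ar) (reduct {Inl E} I)"
  then obtain f where fin: "finite (univ A)" and f: "embedding {Inl E} (In_arity ar) f A (reduct {Inl E} I)"
    by (auto simp: Age_def embeds_def)
  have "finite (snd ` f ` univ A)" "snd ` f ` univ A \<subseteq> univ T"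
    using fin f by (auto simp: embedding_def)
  moreover have "{E} \<subseteq> LT"
    using E_in_LT by simp
  ultimately obtain B0 where B0: "B0 \<in> Age {E} ar (reduct {E} T)"
    and B0_ext: "\<And>u v. embedding {E} ar u (reduct {E} T) (reduct {E} T) \<Longrightarrow> embedding {E} ar v B0 (reduct {E} T) \<Longrightarrow>
                   \<exists>\<psi>. embedding LT ar \<psi> (pullback LT ar T u (snd ` f ` univ A)) (pullback LT ar T v (univ B0))"
    using expansion_property_pullback[OF EP] by blast
  show "\<exists>B\<in>Age {Inl E} (In_arity ar) (reduct {Inl E} I). \<forall>As\<in>Age (In_lang LT n) (In_arity ar) I.
          \<forall>Bs\<in>Age (In_lang LT n) (In_arity ar) I.
            reduct {Inl E} As = A \<longrightarrow> reduct {Inl E} Bs = B \<longrightarrow> embeds (In_lang LT n) (In_arity ar) As Bs"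
  proof (intro bexI[of _ "copies E n B0"] ballI impI)
    show "copies E n B0 \<in> Age {Inl E} (In_arity ar) (reduct {Inl E} I)"
      by (rule copies_in_Age[OF B0])
    fix As Bs
    assume "As \<in> Age (In_lang LT n) (In_arity ar) I" "Bs \<in> Age (In_lang LT n) (In_arity ar) I"
      and "reduct {Inl E} As = A" "reduct {Inl E} Bs = copies E n B0"
    moreover obtain h k where "embedding (In_lang LT n) (In_arity ar) h As I" "embedding (In_lang LT n) (In_arity ar) k Bs I"
      using calculation(1,2) by (auto simp: Age_def embeds_def)
    ultimately show "embeds (In_lang LT n) (In_arity ar) As Bs"
      using expansion_embeds_into_copies[OF hom fin f B0 B0_ext] by blast
  qed
qed

end

theorem mainTheorem8:
  fixes LT :: "'r set" and ar :: "'r \<Rightarrow> nat" and E Lt :: 'r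
    and Tstar :: "('a, 'r) struct"
  assumes "countable LT"
    and "E \<in> LT" and "Lt \<in> LT" and "E \<noteq> Lt"
    and "ar E = 2" and "ar Lt = 2"
    and "wf_struct LT ar Tstar"
    and "countable (univ Tstar)"
    and "tournament E (reduct {E} Tstar)"
    and "homogeneous {E} ar (reduct {E} Tstar)"
    and "strict_linear_order_on (univ Tstar) (\<lambda>x y. rel Tstar Lt [x, y])"
    and "expansion_property {E} LT ar (Age {E} ar (reduct {E} Tstar)) (Age LT ar Tstar)"
    and "n > 0"
  shows "expansion_property {Inl E} (In_lang LT n) (In_arity ar)
           (Age {Inl E} (In_arity ar) (reduct {Inl E} (In_star LT ar Lt n Tstar)))
           (Age (In_lang LT n) (In_arity ar) (In_star LT ar Lt n Tstar))"
proof -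
  interpret In_star_setting LT ar E Lt Tstar n
    using assms by unfold_locales
  show ?thesis
    using expansion_property_In_star assms by blast
qed

end
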